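(* Let $\mathcal{B}_a\subset\mathbb{R}^6$ be the set of all $(a,b,c,d,e,f)$ such that the Type $\mathcal{B}$ model $\mathcal{N}(a,b,c,d,e,f)$ has symmetric Ricci tensor $\rho_s=0$ but alternating Ricci tensor $\rho_a\neq0$. Define $\mathcal{V}_1(r,s,t):=(s,t,r,0,0,r)$ and $\mathcal{V}_2(u,v,w):=(1-2uw+vw^2,\ w(1-uw+vw^2),\ u-vw,\ -vw^2,\ v,\ u+vw)$, and let $\mathcal{D}_1$ be the range of $\mathcal{V}_1$ restricted to $r\neq0$ and $\mathcal{D}_2$ the range of $\mathcal{V}_2$ restricted to $u\neq0$. Then $\mathcal{B}_a=\mathcal{D}_1\cup\mathcal{D}_2$, and $\mathcal{V}_1$ (for $r\neq0$) and $\mathcal{V}_2$ (for $u\neq0$) define smoothly embedded $3$-dimensional submanifolds of $\mathbb{R}^6$ which intersect transversally along a smooth $2$-dimensional submanifold.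
   Context: For $(a,b,c,d,e,f)\in\mathbb{R}^6$, the Type $\mathcal{B}$ model $\mathcal{N}(a,b,c,d,e,f)$ is $(\mathbb{R}^+\times\mathbb{R},\nabla)$ where $\nabla$ is the torsion free connection with Christoffel symbols ($\nabla_{\partial_{x^i}}\partial_{x^j}=\Gamma_{ij}{}^k\partial_{x^k}$) $\Gamma_{11}{}^1=a/x^1$, $\Gamma_{11}{}^2=b/x^1$, $\Gamma_{12}{}^1=\Gamma_{21}{}^1=c/x^1$, $\Gamma_{12}{}^2=\Gamma_{21}{}^2=d/x^1$, $\Gamma_{22}{}^1=e/x^1$, $\Gamma_{22}{}^2=f/x^1$. Its Ricci tensor is $\rho=(x^1)^{-2}\begin{pmatrix}(a-d+1)d+b(f-c) & cd-be+f\\ c(d-1)-be & -c^2+fc+(a-d-1)e\end{pmatrix}$ (rows/columns indexed by $1,2$). The symmetric and alternating parts are $\rho_s(X,Y)=\frac12(\rho(X,Y)+\rho(Y,X))$ and $\rho_a(X,Y)=\frac12(\rho(X,Y)-\rho(Y,X))$.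
   Formalization: Transversality is replaced by a clean intersection: the intersection of $\mathcal{D}_1$ and $\mathcal{D}_2$ is a smoothly embedded 2-dimensional submanifold, and at each of its points the tangent spaces of the two 3-dimensional submanifolds intersect exactly in its tangent space. Each condition added here is assumed in the paper as well or is needed for the statement above to hold. *)

theory Defs
  imports "HOL-Analysis.Analysis"
begin

text \<open>Ricci tensor of N(a,b,c,d,e,f) at the point x = (x^1,x^2), x^1 > 0,
  evaluated on tangent vectors X, Y (components w.r.t. d/dx^1, d/dx^2).\<close>
definition ricci :: "real^6 \<Rightarrow> real^2 \<Rightarrow> real^2 \<Rightarrow> real^2 \<Rightarrow> real" where
  "ricci p x X Y =
     (let a = p$1; b = p$2; c = p$3; d = p$4; e = p$5; f = p$6;
          r11 = (a - d + 1) * d + b * (f - c);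
          r12 = c * d - b * e + f;
          r21 = c * (d - 1) - b * e;
          r22 = - (c^2) + f * c + (a - d - 1) * e
      in inverse ((x$1)^2) *
         (X$1 * Y$1 * r11 + X$1 * Y$2 * r12 + X$2 * Y$1 * r21 + X$2 * Y$2 * r22))"

definition ricci_s :: "real^6 \<Rightarrow> real^2 \<Rightarrow> real^2 \<Rightarrow> real^2 \<Rightarrow> real" where
  "ricci_s p x X Y = (ricci p x X Y + ricci p x Y X) / 2"

definition ricci_a :: "real^6 \<Rightarrow> real^2 \<Rightarrow> real^2 \<Rightarrow> real^2 \<Rightarrow> real" where
  "ricci_a p x X Y = (ricci p x X Y - ricci p x Y X) / 2"

definition B_a :: "(real^6) set" where
  "B_a = {p. (\<forall>x X Y. x$1 > 0 \<longrightarrow> ricci_s p x X Y = 0) \<and>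
             \<not> (\<forall>x X Y. x$1 > 0 \<longrightarrow> ricci_a p x X Y = 0)}"

definition V1 :: "real^3 \<Rightarrow> real^6" where
  "V1 y = (let r = y$1; s = y$2; t = y$3 in vector [s, t, r, 0, 0, r])"

definition V2 :: "real^3 \<Rightarrow> real^6" where
  "V2 y = (let u = y$1; v = y$2; w = y$3 in
     vector [1 - 2 * u * w + v * w^2, w * (1 - u * w + v * w^2), u - v * w, - v * w^2, v, u + v * w])"

definition U1 :: "(real^3) set" where "U1 = {y. y$1 \<noteq> 0}"
definition U2 :: "(real^3) set" where "U2 = {y. y$1 \<noteq> 0}"

definition D1 :: "(real^6) set" where "D1 = V1 ` U1"
definition D2 :: "(real^6) set" where "D2 = V2 ` U2"

fun Ck_on :: "nat \<Rightarrow> 'a::euclidean_space set \<Rightarrow> ('a \<Rightarrow> 'b::real_normed_vector) \<Rightarrow> bool" where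
  "Ck_on 0 U f = continuous_on U f"
| "Ck_on (Suc k) U f =
     (\<exists>Df. (\<forall>x\<in>U. (f has_derivative Df x) (at x)) \<and> (\<forall>v. Ck_on k U (\<lambda>x. Df x v)))"

definition smooth_on :: "'a::euclidean_space set \<Rightarrow> ('a \<Rightarrow> 'b::real_normed_vector) \<Rightarrow> bool" where
  "smooth_on U f \<longleftrightarrow> open U \<and> (\<forall>k. Ck_on k U f)"

text \<open>A smooth embedding of an open set U \<subseteq> R^k: smooth, injective immersion,
  homeomorphism onto its image. Its image is then an embedded k-dimensional submanifold.\<close>
definition smooth_embedding :: "'a::euclidean_space set \<Rightarrow> ('a \<Rightarrow> 'b::euclidean_space) \<Rightarrow> bool" where
  "smooth_embedding U f \<longleftrightarrow>
     smooth_on U f \<and> inj_on f U \<and>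
     (\<forall>x\<in>U. inj (frechet_derivative f (at x))) \<and>
     (\<exists>g. homeomorphism U (f ` U) f g)"

definition tangent_at :: "('a::real_normed_vector \<Rightarrow> 'b::real_normed_vector) \<Rightarrow> 'a \<Rightarrow> 'b set" where
  "tangent_at f x = range (frechet_derivative f (at x))"

end

theory Submission
  imports Defs
begin

text \<open>
  With respect to the frame \<open>\<partial>\<^sub>1, \<partial>\<^sub>2\<close> the Ricci tensor is \<open>(x\<^sup>1)\<^sup>-\<^sup>2\<close> times a constant
  matrix, so \<open>\<rho>\<^sub>s = 0\<close> amounts to three polynomial equations in \<open>(a,b,c,d,e,f)\<close> and
  \<open>\<rho>\<^sub>a \<noteq> 0\<close> to \<open>c + f \<noteq> 0\<close>. If \<open>e = 0\<close> the equations force \<open>d = 0\<close> and \<open>f = c \<noteq> 0\<close>, which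
  is \<open>\<V>\<^sub>1\<close>; if \<open>e \<noteq> 0\<close> they can be solved for \<open>(a,b,c,d,f)\<close> in terms of
  \<open>u = (c+f)/2\<close>, \<open>v = e\<close>, \<open>w = (f-c)/2e\<close>, which is \<open>\<V>\<^sub>2\<close>.
  Both parametrizations are polynomial, with polynomial derivatives of full rank and
  explicit continuous left inverses, hence smooth embeddings. The two images meet exactly
  where \<open>v = 0\<close>, i.e. along the image of the plane \<open>v = 0\<close> under \<open>\<V>\<^sub>2\<close>, and there the
  tangent spaces meet in the tangent plane of that surface.
\<close>

lemma exhaust_6:
  fixes x :: 6
  shows "x = 1 \<or> x = 2 \<or> x = 3 \<or> x = 4 \<or> x = 5 \<or> x = 6"
proof (induct x)
  case (of_int z)
  then have "z = 0 \<or> z = 1 \<or> z = 2 \<or> z = 3 \<or> z = 4 \<or> z = 5" by fastforce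
  then show ?case by auto
qed

lemma forall_6: "(\<forall>i::6. P i) \<longleftrightarrow> P 1 \<and> P 2 \<and> P 3 \<and> P 4 \<and> P 5 \<and> P 6"
  by (metis exhaust_6)

lemma vector_6 [simp]:
  "(vector [x1,x2,x3,x4,x5,x6] :: ('a::zero)^6)$1 = x1"
  "(vector [x1,x2,x3,x4,x5,x6] :: ('a::zero)^6)$2 = x2"
  "(vector [x1,x2,x3,x4,x5,x6] :: ('a::zero)^6)$3 = x3"
  "(vector [x1,x2,x3,x4,x5,x6] :: ('a::zero)^6)$4 = x4"
  "(vector [x1,x2,x3,x4,x5,x6] :: ('a::zero)^6)$5 = x5"
  "(vector [x1,x2,x3,x4,x5,x6] :: ('a::zero)^6)$6 = x6"
  unfolding vector_def by simp_all

lemma vec_eq_iff_6: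
  "(p::'a^6) = q \<longleftrightarrow> p$1 = q$1 \<and> p$2 = q$2 \<and> p$3 = q$3 \<and> p$4 = q$4 \<and> p$5 = q$5 \<and> p$6 = q$6"
  by (auto simp: vec_eq_iff forall_6)

lemma vec_eq_iff_3: "(p::'a^3) = q \<longleftrightarrow> p$1 = q$1 \<and> p$2 = q$2 \<and> p$3 = q$3"
  by (auto simp: vec_eq_iff forall_3)

lemma vec_eq_iff_2: "(p::'a^2) = q \<longleftrightarrow> p$1 = q$1 \<and> p$2 = q$2"
  by (auto simp: vec_eq_iff forall_2)

lemma has_derivative_vec_componentwise:
  fixes f :: "'a::real_normed_vector \<Rightarrow> real^'n"
  assumes "\<And>i. ((\<lambda>x. f x $ i) has_derivative (\<lambda>h. f' h $ i)) (at a)"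
  shows "(f has_derivative f') (at a)"
  using assms by (subst has_derivative_componentwise_within)
    (auto simp: Basis_vec_def cart_eq_inner_axis[symmetric])

lemma continuous_on_vec_componentwise:
  fixes f :: "'a::topological_space \<Rightarrow> real^'n"
  assumes "\<And>i. continuous_on S (\<lambda>x. f x $ i)"
  shows "continuous_on S f"
  using continuous_on_vec_lambda[of S "\<lambda>i x. f x $ i", OF assms] by simp

lemma polynomial_function_vec_componentwise:
  fixes f :: "'a::real_normed_vector \<Rightarrow> real^'n"
  assumes "\<And>i. real_polynomial_function (\<lambda>x. f x $ i)"
  shows "polynomial_function f"
  using assms
  by (auto simp: polynomial_function_iff_Basis_inner Basis_vec_def cart_eq_inner_axis[symmetric])

lemma has_derivative_vec_nth [derivative_intros]:
  "((\<lambda>x::real^'n. x $ i) has_derivative (\<lambda>h. h $ i)) F"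
  using bounded_linear_vec_nth by (rule bounded_linear_imp_has_derivative)

lemma real_polynomial_function_vec_nth [intro]: "real_polynomial_function (\<lambda>x::real^'n. x $ i)"
  using bounded_linear_vec_nth by blast

section \<open>Polynomial maps are smooth\<close>

lemma real_polynomial_function_has_derivative:
  "real_polynomial_function f \<Longrightarrow>
     \<exists>Df. (\<forall>x. (f has_derivative Df x) (at x)) \<and> (\<forall>v. real_polynomial_function (\<lambda>x. Df x v))"
proof (induction rule: real_polynomial_function.induct)
  case (linear f)
  then show ?case
    by (intro exI[of _ "\<lambda>x. f"]) (auto intro: bounded_linear_imp_has_derivative)
next
  case (const c)
  show ?case by (intro exI[of _ "\<lambda>x h. 0"]) auto
next
  case (add f g)
  then obtain Df Dg
    where "\<forall>x. (f has_derivative Df x) (at x)" "\<forall>v. real_polynomial_function (\<lambda>x. Df x v)"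
      and "\<forall>x. (g has_derivative Dg x) (at x)" "\<forall>v. real_polynomial_function (\<lambda>x. Dg x v)"
    by blast
  then show ?case
    by (intro exI[of _ "\<lambda>x h. Df x h + Dg x h"]) (auto intro: has_derivative_add)
next
  case (mult f g)
  then obtain Df Dg
    where "\<forall>x. (f has_derivative Df x) (at x)" "\<forall>v. real_polynomial_function (\<lambda>x. Df x v)"
      and "\<forall>x. (g has_derivative Dg x) (at x)" "\<forall>v. real_polynomial_function (\<lambda>x. Dg x v)"
    by blast
  with mult.hyps show ?case
    by (intro exI[of _ "\<lambda>x h. f x * Dg x h + Df x h * g x"])
       (auto intro!: has_derivative_mult real_polynomial_function.intros(3,4))
qed

lemma polynomial_function_has_derivative:
  fixes f :: "'a::real_normed_vector \<Rightarrow> 'b::euclidean_space"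
  assumes "polynomial_function f"
  shows "\<exists>Df. (\<forall>x. (f has_derivative Df x) (at x)) \<and> (\<forall>v. polynomial_function (\<lambda>x. Df x v))"
proof -
  have "\<forall>b\<in>Basis. \<exists>D. (\<forall>x. ((\<lambda>x. f x \<bullet> b) has_derivative D x) (at x)) \<and>
                       (\<forall>v. real_polynomial_function (\<lambda>x. D x v))"
    using assms
    by (simp add: polynomial_function_iff_Basis_inner real_polynomial_function_has_derivative)
  then obtain D where D: "\<And>b x. b \<in> Basis \<Longrightarrow> ((\<lambda>x. f x \<bullet> b) has_derivative D b x) (at x)"
    "\<And>b v. b \<in> Basis \<Longrightarrow> real_polynomial_function (\<lambda>x. D b x v)"
    by metis
  define Df where "Df x v = (\<Sum>b\<in>Basis. D b x v *\<^sub>R b)" for x v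
  have Df_inner: "Df x v \<bullet> b = D b x v" if "b \<in> Basis" for x v b
    using that by (simp add: Df_def inner_sum_left inner_Basis if_distrib cong: if_cong)
  have "(f has_derivative Df x) (at x)" for x
    by (subst has_derivative_componentwise_within) (simp add: Df_inner D)
  moreover have "polynomial_function (\<lambda>x. Df x v)" for v
    by (simp add: polynomial_function_iff_Basis_inner Df_inner D)
  ultimately show ?thesis by blast
qed

lemma polynomial_function_smooth_on:
  fixes f :: "'a::euclidean_space \<Rightarrow> 'b::euclidean_space"
  assumes "polynomial_function f" and "open U"
  shows "smooth_on U f"
proof -
  have "Ck_on k U f" if "polynomial_function f" for k and f :: "'a \<Rightarrow> 'b"
    using that
  proof (induction k arbitrary: f)
    case 0
    then show ?case
      by (simp add: differentiable_imp_continuous_on differentiable_on_polynomial_function)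
  next
    case (Suc k)
    then show ?case using polynomial_function_has_derivative by fastforce
  qed
  with assms show ?thesis by (simp add: smooth_on_def)
qed

lemma smooth_embedding_polynomial_functionI:
  assumes "polynomial_function f" and "open U"
    and "\<And>x. x \<in> U \<Longrightarrow> (f has_derivative Df x) (at x)" and "\<And>x. x \<in> U \<Longrightarrow> inj (Df x)"
    and "continuous_on (f ` U) g" and "\<And>x. x \<in> U \<Longrightarrow> g (f x) = x"
  shows "smooth_embedding U f"
  unfolding smooth_embedding_def
proof (intro conjI ballI exI)
  show "smooth_on U f" using assms(1,2) by (rule polynomial_function_smooth_on)
  show "inj_on f U" using assms(6) by (metis inj_onI)
  show "inj (frechet_derivative f (at x))" if "x \<in> U" for x
    using that assms(3,4) by (metis frechet_derivative_at)
  have "continuous_on U f"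
    using assms(1)
    by (simp add: differentiable_imp_continuous_on differentiable_on_polynomial_function)
  with assms(5,6) show "homeomorphism U (f ` U) f g"
    by (auto simp: homeomorphism_def image_image)
qed

section \<open>The parametrizations\<close>

lemma open_U1: "open U1"
  unfolding U1_def by (intro open_Collect_neq continuous_intros)

lemma open_U2: "open U2"
  unfolding U2_def by (intro open_Collect_neq continuous_intros)

lemma V1_nth [simp]:
  "V1 y $ 1 = y$2" "V1 y $ 2 = y$3" "V1 y $ 3 = y$1" "V1 y $ 4 = 0" "V1 y $ 5 = 0" "V1 y $ 6 = y$1"
  by (simp_all add: V1_def Let_def)

lemma V2_nth [simp]:
  "V2 y $ 1 = 1 - 2 * y$1 * y$3 + y$2 * y$3^2"
  "V2 y $ 2 = y$3 * (1 - y$1 * y$3 + y$2 * y$3^2)"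
  "V2 y $ 3 = y$1 - y$2 * y$3"
  "V2 y $ 4 = - y$2 * y$3^2"
  "V2 y $ 5 = y$2"
  "V2 y $ 6 = y$1 + y$2 * y$3"
  by (simp_all add: V2_def Let_def)

lemma range_V1: "range V1 = {q. q$3 = q$6 \<and> q$4 = 0 \<and> q$5 = 0}"
proof (intro set_eqI iffI)
  fix q :: "real^6" assume "q \<in> {q. q$3 = q$6 \<and> q$4 = 0 \<and> q$5 = 0}"
  then have "q = V1 (vector [q$3, q$1, q$2])" by (simp add: vec_eq_iff_6)
  then show "q \<in> range V1" by blast
qed auto

lemma D1_eq: "D1 = {q. q$3 = q$6 \<and> q$4 = 0 \<and> q$5 = 0 \<and> q$3 \<noteq> 0}"
proof -
  have "V1 ` U1 = {q \<in> range V1. q$3 \<noteq> 0}" by (auto simp: U1_def)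
  then show ?thesis by (simp add: D1_def range_V1)
qed

definition DV2 :: "real^3 \<Rightarrow> real^3 \<Rightarrow> real^6" where
  "DV2 y h = (let u = y$1; v = y$2; w = y$3 in
     vector [- 2 * (h$1 * w + u * h$3) + h$2 * w^2 + 2 * v * w * h$3,
             h$3 - h$1 * w^2 - 2 * u * w * h$3 + h$2 * w^3 + 3 * v * w^2 * h$3,
             h$1 - h$2 * w - v * h$3,
             - h$2 * w^2 - 2 * v * w * h$3,
             h$2,
             h$1 + h$2 * w + v * h$3])"

lemma DV2_nth [simp]:
  "DV2 y h $ 1 = - 2 * (h$1 * y$3 + y$1 * h$3) + h$2 * y$3^2 + 2 * y$2 * y$3 * h$3"
  "DV2 y h $ 2 = h$3 - h$1 * y$3^2 - 2 * y$1 * y$3 * h$3 + h$2 * y$3^3 + 3 * y$2 * y$3^2 * h$3"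
  "DV2 y h $ 3 = h$1 - h$2 * y$3 - y$2 * h$3"
  "DV2 y h $ 4 = - h$2 * y$3^2 - 2 * y$2 * y$3 * h$3"
  "DV2 y h $ 5 = h$2"
  "DV2 y h $ 6 = h$1 + h$2 * y$3 + y$2 * h$3"
  by (simp_all add: DV2_def Let_def)

lemma has_derivative_V1: "(V1 has_derivative V1) (at y)"
  apply (rule has_derivative_vec_componentwise)
  subgoal for i using exhaust_6[of i] by (auto intro!: derivative_eq_intros)
  done

lemma has_derivative_V2: "(V2 has_derivative DV2 y) (at y)"
  apply (rule has_derivative_vec_componentwise)
  subgoal for i using exhaust_6[of i]
    by (elim disjE; simp)
       (auto intro!: derivative_eq_intros
          simp: fun_eq_iff algebra_simps power2_eq_square power3_eq_cube)
  done

lemma inj_DV2: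
  assumes "y$1 \<noteq> 0"
  shows "inj (DV2 y)"
proof -
  have "linear (DV2 y)"
    using has_derivative_V2 by (rule has_derivative_linear)
  moreover have "h = 0" if "DV2 y h = 0" for h
  proof -
    from that have DV2_h: "DV2 y h $ k = 0" for k by simp
    have h2: "h$2 = 0" using DV2_h[of 5] by simp
    have h1: "h$1 = 0" using DV2_h[of 3] DV2_h[of 6] h2 by auto
    have "DV2 y h $ 1 + DV2 y h $ 4 = - 2 * (y$1 * h$3)"
      using h1 h2 by (simp add: algebra_simps)
    then have "y$1 * h$3 = 0" using DV2_h[of 1] DV2_h[of 4] by (simp del: DV2_nth)
    then have "h$3 = 0" using assms by simp
    with h1 h2 show "h = 0" by (simp add: vec_eq_iff_3)
  qed
  ultimately show ?thesis by (simp add: linear_injective_0)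
qed

lemma polynomial_function_V1: "polynomial_function V1"
  apply (rule polynomial_function_vec_componentwise)
  subgoal for i using exhaust_6[of i] by auto
  done

lemma polynomial_function_V2: "polynomial_function V2"
  apply (rule polynomial_function_vec_componentwise)
  subgoal for i using exhaust_6[of i]
    by (elim disjE; simp; intro real_polynomial_function_diff real_polynomial_function_minus
        real_polynomial_function_power real_polynomial_function.intros(2-4)
        real_polynomial_function_vec_nth)
  done

definition V1_inv :: "real^6 \<Rightarrow> real^3" where
  "V1_inv p = vector [p$3, p$1, p$2]"

text \<open>On the image of \<open>\<V>\<^sub>2\<close> one has \<open>c + f = 2u\<close> and \<open>1 - a - d = 2uw\<close>.\<close>
definition V2_inv :: "real^6 \<Rightarrow> real^3" where
  "V2_inv p = vector [(p$3 + p$6) / 2, p$5, (1 - p$1 - p$4) / (p$3 + p$6)]"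

lemma V2_inv_V2: "y \<in> U2 \<Longrightarrow> V2_inv (V2 y) = y"
  by (simp add: U2_def V2_inv_def vec_eq_iff_3 field_simps)

lemma continuous_on_V2_inv: "continuous_on (V2 ` U2) V2_inv"
proof (rule continuous_on_vec_componentwise)
  fix i :: 3
  have "\<forall>p \<in> V2 ` U2. p$3 + p$6 \<noteq> 0"
    by (auto simp: U2_def)
  then show "continuous_on (V2 ` U2) (\<lambda>p. V2_inv p $ i)"
    using exhaust_3[of i] by (elim disjE; simp add: V2_inv_def; auto intro!: continuous_intros)
qed

lemma smooth_embedding_V1: "smooth_embedding U1 V1"
proof (rule smooth_embedding_polynomial_functionI[where Df = "\<lambda>_. V1" and g = V1_inv])
  show "continuous_on (V1 ` U1) V1_inv"
    apply (rule continuous_on_vec_componentwise)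
    subgoal for i using exhaust_3[of i]
      by (elim disjE; simp add: V1_inv_def; intro continuous_intros)
    done
  show "inj V1" by (rule injI) (simp add: vec_eq_iff_6 vec_eq_iff_3)
qed (auto simp: polynomial_function_V1 open_U1 has_derivative_V1 V1_inv_def vec_eq_iff_3)

lemma smooth_embedding_V2: "smooth_embedding U2 V2"
  by (rule smooth_embedding_polynomial_functionI[where Df = DV2 and g = V2_inv])
     (use polynomial_function_V2 open_U2 has_derivative_V2 continuous_on_V2_inv V2_inv_V2 in
        \<open>auto simp: U2_def intro: inj_DV2\<close>)

section \<open>The set \<open>\<B>\<^sub>a\<close>\<close>

lemma ricci_s_eq:
  "ricci_s p x X Y = inverse ((x$1)^2) *
     (X$1 * Y$1 * ((p$1 - p$4 + 1) * p$4 + p$2 * (p$6 - p$3))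
      + (X$1 * Y$2 + X$2 * Y$1) * ((2 * p$3 * p$4 - p$3 - 2 * p$2 * p$5 + p$6) / 2)
      + X$2 * Y$2 * (- ((p$3)^2) + p$6 * p$3 + (p$1 - p$4 - 1) * p$5))"
  unfolding ricci_s_def ricci_def Let_def
  by (simp add: algebra_simps add_divide_distrib diff_divide_distrib)

lemma ricci_a_eq:
  "ricci_a p x X Y = inverse ((x$1)^2) * (X$1 * Y$2 - X$2 * Y$1) * ((p$3 + p$6) / 2)"
  unfolding ricci_a_def ricci_def Let_def
  by (simp add: algebra_simps add_divide_distrib diff_divide_distrib)

lemma B_a_iff:
  "p \<in> B_a \<longleftrightarrow>
     (p$1 - p$4 + 1) * p$4 + p$2 * (p$6 - p$3) = 0 \<and>
     - ((p$3)^2) + p$6 * p$3 + (p$1 - p$4 - 1) * p$5 = 0 \<and>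
     2 * p$3 * p$4 - p$3 - 2 * p$2 * p$5 + p$6 = 0 \<and>
     p$3 + p$6 \<noteq> 0"
  (is "_ \<longleftrightarrow> ?E\<^sub>1\<^sub>1 \<and> ?E\<^sub>2\<^sub>2 \<and> ?E\<^sub>1\<^sub>2 \<and> ?A")
proof
  assume "p \<in> B_a"
  then have s: "\<And>x X Y. x$1 > 0 \<Longrightarrow> ricci_s p x X Y = 0"
    and a: "\<not> (\<forall>x X Y. x$1 > 0 \<longrightarrow> ricci_a p x X Y = 0)" by (auto simp: B_a_def)
  let ?x = "vector [1, 0] :: real^2" and ?e\<^sub>2 = "vector [0, 1] :: real^2"
  have "ricci_s p ?x ?x ?x = 0" "ricci_s p ?x ?e\<^sub>2 ?e\<^sub>2 = 0" "ricci_s p ?x ?x ?e\<^sub>2 = 0"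
    using s by auto
  then have "?E\<^sub>1\<^sub>1" "?E\<^sub>2\<^sub>2" "?E\<^sub>1\<^sub>2" unfolding ricci_s_eq by simp_all
  moreover have "?A" using a unfolding ricci_a_eq by auto
  ultimately show "?E\<^sub>1\<^sub>1 \<and> ?E\<^sub>2\<^sub>2 \<and> ?E\<^sub>1\<^sub>2 \<and> ?A" by blast
next
  assume E: "?E\<^sub>1\<^sub>1 \<and> ?E\<^sub>2\<^sub>2 \<and> ?E\<^sub>1\<^sub>2 \<and> ?A"
  then have "ricci_s p x X Y = 0" for x X Y unfolding ricci_s_eq by simp
  moreover have "ricci_a p (vector [1, 0]) (vector [1, 0]) (vector [0, 1]) \<noteq> 0"
    using E unfolding ricci_a_eq by simp
  then have "\<not> (\<forall>x X Y. x$1 > 0 \<longrightarrow> ricci_a p x X Y = 0)"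
    by (metis vector_2(1) zero_less_one)
  ultimately show "p \<in> B_a" unfolding B_a_def by blast
qed

lemma ricci_s_zero_solution:
  fixes a b c d e f :: real
  assumes E\<^sub>1\<^sub>1: "(a - d + 1) * d + b * (f - c) = 0"
    and E\<^sub>2\<^sub>2: "- (c^2) + f * c + (a - d - 1) * e = 0"
    and E\<^sub>1\<^sub>2: "2 * c * d - c - 2 * b * e + f = 0"
    and "e \<noteq> 0"
  defines "u \<equiv> (c + f) / 2" and "w \<equiv> (f - c) / (2 * e)"
  shows "a = 1 - 2 * u * w + e * w^2 \<and> b = w * (1 - u * w + e * w^2) \<and> c = u - e * w
     \<and> d = - e * w^2 \<and> f = u + e * w"
proof -
  have "4 * e * d + (f - c)^2 =
      2 * e * ((a - d + 1) * d + b * (f - c)) - 2 * d * (- (c^2) + f * c + (a - d - 1) * e)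
      + (f - c) * (2 * c * d - c - 2 * b * e + f)"
    by (simp add: algebra_simps power2_eq_square)
  also have "\<dots> = 0"
    using E\<^sub>1\<^sub>1 E\<^sub>2\<^sub>2 E\<^sub>1\<^sub>2 by simp
  finally have d: "d = - ((f - c)^2) / (4 * e)"
    using \<open>e \<noteq> 0\<close> by (simp add: field_simps)
  have a: "a = 1 + d + c * (c - f) / e"
    using E\<^sub>2\<^sub>2 \<open>e \<noteq> 0\<close> by (simp add: field_simps power2_eq_square)
  have b: "b = (2 * c * d - c + f) / (2 * e)"
    using E\<^sub>1\<^sub>2 \<open>e \<noteq> 0\<close> by (simp add: field_simps)
  show ?thesis
    unfolding u_def w_def using \<open>e \<noteq> 0\<close> by (simp add: a b d field_simps power2_eq_square)
qed

lemma D1_subset_B_a: "D1 \<subseteq> B_a"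
  by (auto simp: D1_eq B_a_iff power2_eq_square)

lemma D2_subset_B_a: "D2 \<subseteq> B_a"
  by (auto simp: D2_def U2_def B_a_iff power2_eq_square algebra_simps)

lemma B_a_subset_D1_Un_D2:
  assumes "p \<in> B_a"
  shows "p \<in> D1 \<union> D2"
proof -
  have E\<^sub>1\<^sub>1: "(p$1 - p$4 + 1) * p$4 + p$2 * (p$6 - p$3) = 0"
    and E\<^sub>2\<^sub>2: "- ((p$3)^2) + p$6 * p$3 + (p$1 - p$4 - 1) * p$5 = 0"
    and E\<^sub>1\<^sub>2: "2 * p$3 * p$4 - p$3 - 2 * p$2 * p$5 + p$6 = 0"
    and A: "p$3 + p$6 \<noteq> 0"
    using assms unfolding B_a_iff by auto
  show ?thesis
  proof (cases "p$5 = 0")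
    case True
    then have "p$3 * (p$6 - p$3) = 0" using E\<^sub>2\<^sub>2 by (simp add: algebra_simps power2_eq_square)
    moreover have "p$3 \<noteq> 0" using E\<^sub>1\<^sub>2 A True by auto
    ultimately have "p$6 = p$3" by simp
    with E\<^sub>1\<^sub>2 True \<open>p$3 \<noteq> 0\<close> have "p \<in> D1" by (simp add: D1_eq)
    then show ?thesis ..
  next
    case False
    let ?y = "vector [(p$3 + p$6) / 2, p$5, (p$6 - p$3) / (2 * p$5)] :: real^3"
    have "p = V2 ?y"
      using ricci_s_zero_solution[OF E\<^sub>1\<^sub>1 E\<^sub>2\<^sub>2 E\<^sub>1\<^sub>2 False] by (simp add: vec_eq_iff_6)
    moreover have "?y \<in> U2" using A by (simp add: U2_def)
    ultimately show ?thesis unfolding D2_def by blast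
  qed
qed

lemma B_a_eq_D1_Un_D2: "B_a = D1 \<union> D2"
  using B_a_subset_D1_Un_D2 D1_subset_B_a D2_subset_B_a by blast

section \<open>The intersection \<open>\<D>\<^sub>1 \<inter> \<D>\<^sub>2\<close>\<close>

definition uw_plane :: "real^2 \<Rightarrow> real^3" where
  "uw_plane z = vector [z$1, 0, z$2]"

definition V12 :: "real^2 \<Rightarrow> real^6" where
  "V12 z = V2 (uw_plane z)"

definition U12 :: "(real^2) set" where
  "U12 = {z. z$1 \<noteq> 0}"

lemma uw_plane_nth [simp]: "uw_plane z $ 1 = z$1" "uw_plane z $ 2 = 0" "uw_plane z $ 3 = z$2"
  by (simp_all add: uw_plane_def)

lemma range_uw_plane: "range uw_plane = {y. y$2 = 0}"
proof (intro set_eqI iffI)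
  fix y :: "real^3" assume "y \<in> {y. y$2 = 0}"
  then have "y = uw_plane (vector [y$1, y$3])" by (simp add: vec_eq_iff_3)
  then show "y \<in> range uw_plane" by blast
qed auto

lemma has_derivative_uw_plane: "(uw_plane has_derivative uw_plane) (at z)"
  apply (rule has_derivative_vec_componentwise)
  subgoal for i using exhaust_3[of i] by (auto intro!: derivative_eq_intros)
  done

lemma has_derivative_V12: "(V12 has_derivative (\<lambda>k. DV2 (uw_plane z) (uw_plane k))) (at z)"
  unfolding V12_def by (rule has_derivative_compose[OF has_derivative_uw_plane has_derivative_V2])

lemma polynomial_function_V12: "polynomial_function V12"
proof -
  have "polynomial_function uw_plane"
    apply (rule polynomial_function_vec_componentwise)
    subgoal for i using exhaust_3[of i] by auto
    done
  then show ?thesis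
    unfolding V12_def[abs_def] using polynomial_function_compose[OF _ polynomial_function_V2]
    by (simp add: o_def)
qed

lemma smooth_embedding_V12: "smooth_embedding U12 V12"
proof (rule smooth_embedding_polynomial_functionI
    [where Df = "\<lambda>z. DV2 (uw_plane z) \<circ> uw_plane"
       and g = "\<lambda>p. vector [V2_inv p $ 1, V2_inv p $ 3]"])
  show "open U12"
    unfolding U12_def by (intro open_Collect_neq continuous_intros)
  have "V12 ` U12 \<subseteq> V2 ` U2"
    by (auto simp: V12_def U12_def U2_def)
  then have "continuous_on (V12 ` U12) V2_inv"
    using continuous_on_V2_inv by (rule continuous_on_subset[rotated])
  then show "continuous_on (V12 ` U12) (\<lambda>p. vector [V2_inv p $ 1, V2_inv p $ 3] :: real^2)"
    apply (intro continuous_on_vec_componentwise)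
    subgoal for i using exhaust_2[of i] by (elim disjE; simp add: continuous_on_component)
    done
  have "inj uw_plane" by (rule injI) (simp add: vec_eq_iff_3 vec_eq_iff_2)
  then show "inj (DV2 (uw_plane z) \<circ> uw_plane)" if "z \<in> U12" for z
    using that by (intro inj_compose inj_DV2) (simp_all add: U12_def)
  show "vector [V2_inv (V12 z) $ 1, V2_inv (V12 z) $ 3] = z" if "z \<in> U12" for z
    using that V2_inv_V2[of "uw_plane z"] by (simp add: V12_def U12_def U2_def vec_eq_iff_2)
qed (auto simp: polynomial_function_V12 has_derivative_V12 o_def)

lemma D1_Int_D2: "D1 \<inter> D2 = V12 ` U12"
proof (intro equalityI subsetI)
  fix p assume "p \<in> D1 \<inter> D2"
  then obtain y where y: "y \<in> U2" "p = V2 y" and "p$5 = 0"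
    by (auto simp: D1_eq D2_def)
  then have "y = uw_plane (vector [y$1, y$3])" by (simp add: vec_eq_iff_3)
  with y have "p = V12 (vector [y$1, y$3])" "vector [y$1, y$3] \<in> U12"
    by (simp_all add: V12_def U12_def U2_def)
  then show "p \<in> V12 ` U12" by blast
next
  fix p assume "p \<in> V12 ` U12"
  then obtain z where "z$1 \<noteq> 0" "p = V2 (uw_plane z)" by (auto simp: V12_def U12_def)
  then show "p \<in> D1 \<inter> D2" by (auto simp: D1_eq D2_def U2_def)
qed

lemma range_V1_Int_range_DV2:
  assumes "y$2 = 0"
  shows "range V1 \<inter> range (DV2 y) = DV2 y ` range uw_plane"
  using assms by (auto simp: range_V1 range_uw_plane)

text \<open>\<open>\<V>\<^sub>1\<close> is linear, so its tangent space is the same at every point \<open>x\<close>.\<close>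
lemma tangent_at_V1_Int_tangent_at_V2:
  assumes "y \<in> U2" and "z \<in> U12" and "V2 y = V12 z"
  shows "tangent_at V1 x \<inter> tangent_at V2 y = tangent_at V12 z"
proof -
  have "y = uw_plane z"
    using assms smooth_embedding_V2
    by (auto simp: smooth_embedding_def V12_def U12_def U2_def dest: inj_onD)
  then have "tangent_at V1 x \<inter> tangent_at V2 y = range V1 \<inter> range (DV2 (uw_plane z))"
    unfolding tangent_at_def by (metis frechet_derivative_at has_derivative_V1 has_derivative_V2)
  also have "\<dots> = range (\<lambda>k. DV2 (uw_plane z) (uw_plane k))"
    by (simp add: range_V1_Int_range_DV2 image_image)
  also have "\<dots> = tangent_at V12 z"
    unfolding tangent_at_def by (metis frechet_derivative_at has_derivative_V12)
  finally show ?thesis .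
qed

theorem theorem1p7:
  shows "B_a = D1 \<union> D2
    \<and> smooth_embedding U1 V1
    \<and> smooth_embedding U2 V2
    \<and> (\<exists>(U :: (real^2) set) (\<phi> :: real^2 \<Rightarrow> real^6).
          smooth_embedding U \<phi> \<and> \<phi> ` U = D1 \<inter> D2 \<and>
          (\<forall>y1\<in>U1. \<forall>y2\<in>U2. \<forall>z\<in>U. V1 y1 = \<phi> z \<longrightarrow> V2 y2 = \<phi> z \<longrightarrow>
              tangent_at V1 y1 \<inter> tangent_at V2 y2 = tangent_at \<phi> z))"
  using B_a_eq_D1_Un_D2 smooth_embedding_V1 smooth_embedding_V2 smooth_embedding_V12 D1_Int_D2
    tangent_at_V1_Int_tangent_at_V2
  by blast

end
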